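(* Let $f$ be a real function on $[0,1]$ satisfying $|f(x')-f(x'')|\le H|x'-x''|^{1/N}$ for all $x',x''\in[0,1]$, and let $x^*\in[0,1]$ be a global minimizer of $f$ on $[0,1]$. Apply PLT to $f$ with the stopping rule disregarded, let $\{x^q\}$ be the resulting infinite sequence of trial points, and assume $p(l)\le Q<\infty$ for all $l>1$. For each iteration $l$, let $j=j(l)$ be the index of an interval $[x_{j-1},x_j]$ (in the ordering of Step 1 at iteration $l$) containing $x^*$, and define $K_j=\max\{(z_{j-1}-f(x^* ))(x^*-x_{j-1})^{-1/N},\ (z_j-f(x^* ))(x_j-x^* )^{-1/N}\}$ and $M_j=|z_{j-1}-z_j|(x_j-x_{j-1})^{-1/N}$. Suppose there is an infinite set of iteration numbers $\{h\}$ such that for every $l\in\{h\}$ one has $4^{1-1/N}K_j^2\ge M_j^2$ and $r\mu_j\ge 2^{1-1/N}K_j+\left(4^{1-1/N}K_j^2-M_j^2\right)^{1/2}$, where $j=j(l)$. Then $x^*$ is a limit point of $\{x^q\}$.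
   Context: Algorithm PLT (parallel information algorithm with local tuning) for minimizing $f$ on $[0,1]$; parameters: integer $N\ge1$, reliability parameter $r>1$, small number $\xi>0$. A "trial" is an evaluation of $f$ at a point. Step 0: perform $q(1)>1$ initial trials at $x^1=0$, $x^2=1$ and some interior points $x^3,\dots,x^{q(1)}\in(0,1)$; set $l=1$. At iteration $l$, let $q=q(l)$ be the number of trials made so far. Step 1: order all trial points as $0=x_1<x_2<\dots<x_q=1$ and set $z_i=f(x_i)$. Step 2: for $2\le j\le q$ compute $\mu_j=\max\{\lambda_j,\gamma_j,\xi\}$, where $\lambda_j=\max\{|z_i-z_{i-1}|/(x_i-x_{i-1})^{1/N}: i\in I_j\}$ with $I_2=\{2,3\}$, $I_j=\{j-1,j,j+1\}$ for $3\le j\le q-1$, $I_q=\{q-1,q\}$; and $\gamma_j=\mu\,(x_j-x_{j-1})^{1/N}/(X^{\max})^{1/N}$ with $\mu=\max\{|z_i-z_{i-1}|/(x_i-x_{i-1})^{1/N}:2\le i\le q\}$ and $X^{\max}=\max\{x_i-x_{i-1}:2\le i\le q\}$. Step 3: for $2\le j\le q$ compute the characteristic $R(j)=r\mu_j(x_j-x_{j-1})^{1/N}+\frac{(z_j-z_{j-1})^2}{r\mu_j(x_j-x_{j-1})^{1/N}}-(z_j+z_{j-1})$. Step 4: choose $p=p(l+1)\le q(l)-1$ and distinct indices $t_1,\dots,t_p$ being the indices of the $p$ largest characteristics ($t_1=\arg\max\{R(i):1<i\le q\}$, $t_k=\arg\max\{R(i):1<i\le q,\ i\ne t_s, 1\le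 s\le k-1\}$); the new trial points are $x^{q+k}=\tfrac12(x_{t_k-1}+x_{t_k})-\frac{1}{2r}\left(\frac{|z_{t_k}-z_{t_k-1}|}{\mu_{t_k}}\right)^N\operatorname{sign}(z_{t_k}-z_{t_k-1})$, $1\le k\le p$. Step 5: evaluate $f$ at these $p$ points in parallel, set $q(l+1)=q(l)+p(l+1)$, $l\leftarrow l+1$, and return to Step 1. (In the paper $f(x)=\phi(y(x))$ where $y$ is a Peano-type space-filling curve mapping $[0,1]$ onto a hyperinterval $D\subset\mathbb R^N$ and $\phi$ is Lipschitz on $D$, which yields the H\"older condition above.) *)

theory Defs
  imports "HOL-Analysis.Analysis"
begin

text \<open>Conventions. A sorted list xs of the current trial points is used; the paper's
  point x_i (1-based, 1 <= i <= q) is xs ! (i - 1), and z_i = f x_i.\<close>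

definition pts :: "(nat \<Rightarrow> real) \<Rightarrow> nat \<Rightarrow> real list" where
  "pts x n = sorted_list_of_set (x ` {1..n})"

definition gapP :: "real list \<Rightarrow> nat \<Rightarrow> real" where
  "gapP xs i = xs ! (i - 1) - xs ! (i - 2)"

definition dd :: "(real \<Rightarrow> real) \<Rightarrow> nat \<Rightarrow> real list \<Rightarrow> nat \<Rightarrow> real" where
  "dd f N xs i = \<bar>f (xs ! (i - 1)) - f (xs ! (i - 2))\<bar> / (gapP xs i) powr (1 / real N)"

definition Iset :: "real list \<Rightarrow> nat \<Rightarrow> nat set" where
  "Iset xs j = {j - 1, j, j + 1} \<inter> {2..length xs}"

definition lam :: "(real \<Rightarrow> real) \<Rightarrow> nat \<Rightarrow> real list \<Rightarrow> nat \<Rightarrow> real" where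
  "lam f N xs j = Max (dd f N xs ` Iset xs j)"

definition mug :: "(real \<Rightarrow> real) \<Rightarrow> nat \<Rightarrow> real list \<Rightarrow> real" where
  "mug f N xs = Max (dd f N xs ` {2..length xs})"

definition Xmax :: "real list \<Rightarrow> real" where
  "Xmax xs = Max (gapP xs ` {2..length xs})"

definition gam :: "(real \<Rightarrow> real) \<Rightarrow> nat \<Rightarrow> real list \<Rightarrow> nat \<Rightarrow> real" where
  "gam f N xs j = mug f N xs * (gapP xs j) powr (1 / real N) / (Xmax xs) powr (1 / real N)"

definition muj :: "(real \<Rightarrow> real) \<Rightarrow> nat \<Rightarrow> real \<Rightarrow> real list \<Rightarrow> nat \<Rightarrow> real" where
  "muj f N xi xs j = max (max (lam f N xs j) (gam f N xs j)) xi"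

definition charR :: "(real \<Rightarrow> real) \<Rightarrow> nat \<Rightarrow> real \<Rightarrow> real \<Rightarrow> real list \<Rightarrow> nat \<Rightarrow> real" where
  "charR f N r xi xs j =
     (let zj = f (xs ! (j - 1)); zj1 = f (xs ! (j - 2));
          a = r * muj f N xi xs j * (gapP xs j) powr (1 / real N)
      in a + (zj - zj1)\<^sup>2 / a - (zj + zj1))"

definition newpt :: "(real \<Rightarrow> real) \<Rightarrow> nat \<Rightarrow> real \<Rightarrow> real \<Rightarrow> real list \<Rightarrow> nat \<Rightarrow> real" where
  "newpt f N r xi xs j =
     (let zj = f (xs ! (j - 1)); zj1 = f (xs ! (j - 2))
      in (xs ! (j - 2) + xs ! (j - 1)) / 2
         - (1 / (2 * r)) * (\<bar>zj - zj1\<bar> / muj f N xi xs j) ^ N * sgn (zj - zj1))"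

text \<open>A run of PLT (stopping rule disregarded): x q is the q-th trial point (q >= 1),
  qn l = q(l) is the number of trials before iteration l (l >= 1), p (l+1) is the number of
  points chosen at iteration l, and t l k (1 <= k <= p(l+1)) are the chosen interval indices.\<close>

definition PLT_run ::
  "(real \<Rightarrow> real) \<Rightarrow> nat \<Rightarrow> real \<Rightarrow> real \<Rightarrow> (nat \<Rightarrow> real) \<Rightarrow> (nat \<Rightarrow> nat)
    \<Rightarrow> (nat \<Rightarrow> nat) \<Rightarrow> (nat \<Rightarrow> nat \<Rightarrow> nat) \<Rightarrow> bool" where
  "PLT_run f N r xi x qn p t \<longleftrightarrow>
     qn 1 > 1 \<and> x 1 = 0 \<and> x 2 = 1 \<and> (\<forall>i\<in>{3..qn 1}. 0 < x i \<and> x i < 1) \<and>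
     (\<forall>l\<ge>1. qn (Suc l) = qn l + p (Suc l) \<and> 1 \<le> p (Suc l) \<and> p (Suc l) \<le> qn l - 1 \<and>
        (let xs = pts x (qn l) in
           inj_on (t l) {1..p (Suc l)} \<and>
           (\<forall>k\<in>{1..p (Suc l)}.
              t l k \<in> {2..length xs} \<and>
              (\<forall>i\<in>{2..length xs} - t l ` {1..<k}. charR f N r xi xs i \<le> charR f N r xi xs (t l k)) \<and>
              x (qn l + k) = newpt f N r xi xs (t l k))))"

definition Kj :: "(real \<Rightarrow> real) \<Rightarrow> nat \<Rightarrow> real \<Rightarrow> real list \<Rightarrow> nat \<Rightarrow> real" where
  "Kj f N xstar xs j =
     max ((f (xs ! (j - 2)) - f xstar) / (xstar - xs ! (j - 2)) powr (1 / real N))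
         ((f (xs ! (j - 1)) - f xstar) / (xs ! (j - 1) - xstar) powr (1 / real N))"

definition Mj :: "(real \<Rightarrow> real) \<Rightarrow> nat \<Rightarrow> real list \<Rightarrow> nat \<Rightarrow> real" where
  "Mj f N xs j = \<bar>f (xs ! (j - 2)) - f (xs ! (j - 1))\<bar> / (gapP xs j) powr (1 / real N)"

end

theory Submission
  imports Defs
begin

(* Suppose x* were not a limit point of the trial sequence. Then the trial points different
   from x* keep a distance d > 0 from x*, so at every iteration the interval [x_{j-1}, x_j]
   containing x* has length at least d. For the favourable iterations l in {h} the tuning
   condition r mu_j >= 2^(1-1/N) K_j + sqrt(4^(1-1/N) K_j^2 - M_j^2) bounds the characteristic
   R(j) from below by a fixed multiple of d^(1/N), while the Hoelder condition bounds every
   characteristic R(t) above by a multiple of (x_t - x_{t-1})^(1/N). Hence the interval of largest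
   characteristic has length at least a fixed multiple of d, and the first new point, which
   stays a fixed fraction of that length away from both ends, is eta-separated from all
   previous trial points. Infinitely many eta-separated points in the compact set [0,1] are
   impossible, which is the contradiction. *)

lemma sorted_consecutive_less:
  fixes xs :: "real list"
  assumes "sorted xs" "distinct xs" "2 \<le> t" "t \<le> length xs"
  shows "xs ! (t - 2) < xs ! (t - 1)"
proof -
  have "xs ! (t - 2) \<le> xs ! (t - 1)" using assms by (intro sorted_nth_mono) auto
  moreover have "xs ! (t - 2) \<noteq> xs ! (t - 1)" using assms by (simp add: nth_eq_iff_index_eq)
  ultimately show ?thesis by simp
qed

lemma gapP_pos:
  fixes xs :: "real list"
  assumes "sorted xs" "distinct xs" "2 \<le> t" "t \<le> length xs"
  shows "gapP xs t > 0"
  using sorted_consecutive_less[OF assms] by (simp add: gapP_def)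

lemma sorted_outside_consecutive:
  fixes xs :: "real list"
  assumes "sorted xs" "2 \<le> t" "t \<le> length xs" "z \<in> set xs"
  shows "z \<le> xs ! (t - 2) \<or> xs ! (t - 1) \<le> z"
proof -
  obtain i where i: "i < length xs" "z = xs ! i" using assms(4) by (metis in_set_conv_nth)
  show ?thesis
  proof (cases "i \<le> t - 2")
    case True
    then show ?thesis using i assms sorted_nth_mono[of xs i "t - 2"] by simp
  next
    case False
    then show ?thesis using i assms sorted_nth_mono[of xs "t - 1" i] by simp
  qed
qed

lemma gapP_ge_isolation:
  fixes xs :: "real list"
  assumes "sorted xs" "distinct xs" "2 \<le> j" "j \<le> length xs"
    and loc: "xs ! (j - 2) \<le> xstar" "xstar \<le> xs ! (j - 1)"
    and iso: "\<forall>z\<in>set xs. z \<noteq> xstar \<longrightarrow> d \<le> \<bar>z - xstar\<bar>"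
  shows "d \<le> gapP xs j"
proof -
  have mem: "xs ! (j - 2) \<in> set xs" "xs ! (j - 1) \<in> set xs" using assms(3,4) by auto
  have "xs ! (j - 2) \<noteq> xstar \<or> xs ! (j - 1) \<noteq> xstar"
    using sorted_consecutive_less[OF assms(1-4)] by auto
  then show ?thesis using iso mem loc by (auto simp: gapP_def)
qed

lemma powr_inverse_power:
  fixes y :: real
  assumes "y > 0" "N \<ge> 1"
  shows "(y powr (1 / real N)) ^ N = y"
  using assms by (simp add: powr_realpow[symmetric] powr_powr)

lemma muj_lower:
  assumes "2 \<le> t" "t \<le> length xs"
  shows "dd f N xs t \<le> muj f N xi xs t" "xi \<le> muj f N xi xs t"
proof -
  have "t \<in> Iset xs t" using assms by (simp add: Iset_def)
  then have "dd f N xs t \<le> lam f N xs t"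
    unfolding lam_def by (intro Max_ge) (auto simp: Iset_def)
  then show "dd f N xs t \<le> muj f N xi xs t" by (simp add: muj_def)
  show "xi \<le> muj f N xi xs t" by (simp add: muj_def)
qed

lemma increment_le_muj:
  fixes xs :: "real list"
  assumes "sorted xs" "distinct xs" "2 \<le> t" "t \<le> length xs"
  shows "\<bar>f (xs ! (t - 1)) - f (xs ! (t - 2))\<bar> \<le> muj f N xi xs t * gapP xs t powr (1 / real N)"
proof -
  have D: "gapP xs t powr (1 / real N) > 0" using gapP_pos[OF assms] by simp
  have "\<bar>f (xs ! (t - 1)) - f (xs ! (t - 2))\<bar> / gapP xs t powr (1 / real N) \<le> muj f N xi xs t"
    using muj_lower(1)[OF assms(3,4)] by (simp add: dd_def)
  then show ?thesis using D by (simp add: divide_le_eq)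
qed

text \<open>Under the Hoelder condition every estimate \<open>\<mu>\<^sub>t\<close> is bounded by \<open>max H \<xi>\<close>:
  all divided differences are at most H, and \<open>\<gamma>\<^sub>t\<close> is at most their maximum.\<close>

lemma muj_upper:
  fixes xs :: "real list"
  assumes holder: "\<forall>x1\<in>{0..1}. \<forall>x2\<in>{0..1}. \<bar>f x1 - f x2\<bar> \<le> Hc * \<bar>x1 - x2\<bar> powr (1 / real N)"
    and sub: "set xs \<subseteq> {0..1}" and s: "sorted xs" "distinct xs" "2 \<le> t" "t \<le> length xs"
  shows "muj f N xi xs t \<le> max Hc xi"
proof -
  have ddH: "dd f N xs i \<le> Hc" if i: "i \<in> {2..length xs}" for i
  proof -
    have gp: "gapP xs i > 0" using gapP_pos[OF s(1,2)] i by auto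
    have "xs ! (i - 2) \<in> set xs" "xs ! (i - 1) \<in> set xs" using i by auto
    then have "xs ! (i - 2) \<in> {0..1}" "xs ! (i - 1) \<in> {0..1}" using sub by auto
    then have "\<bar>f (xs ! (i - 1)) - f (xs ! (i - 2))\<bar> \<le> Hc * \<bar>xs ! (i - 1) - xs ! (i - 2)\<bar> powr (1 / real N)"
      using holder by blast
    also have "\<bar>xs ! (i - 1) - xs ! (i - 2)\<bar> = gapP xs i" using gp by (simp add: gapP_def)
    finally have "\<bar>f (xs ! (i - 1)) - f (xs ! (i - 2))\<bar> \<le> Hc * gapP xs i powr (1 / real N)" .
    then show ?thesis using gp by (simp add: dd_def divide_le_eq)
  qed
  have lamH: "lam f N xs t \<le> Hc"
    unfolding lam_def using s ddH by (subst Max_le_iff) (auto simp: Iset_def)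
  have mugH: "mug f N xs \<le> Hc" unfolding mug_def using s ddH by (subst Max_le_iff) auto
  have mug0: "mug f N xs \<ge> 0" unfolding mug_def using s by (subst Max_ge_iff) (auto simp: dd_def)
  have gp: "gapP xs t > 0" using gapP_pos[OF s] .
  have "gapP xs t \<le> Xmax xs" unfolding Xmax_def using s by (intro Max_ge) auto
  then have "gapP xs t powr (1 / real N) \<le> Xmax xs powr (1 / real N)"
    using gp by (intro powr_mono2) auto
  then have "gapP xs t powr (1 / real N) / Xmax xs powr (1 / real N) \<le> 1"
    using gp by (simp add: divide_le_eq)
  then have "mug f N xs * (gapP xs t powr (1 / real N) / Xmax xs powr (1 / real N)) \<le> mug f N xs"
    using mug0 by (rule mult_left_le)
  then have "gam f N xs t \<le> mug f N xs" by (simp add: gam_def)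
  then have "lam f N xs t \<le> max Hc xi" "gam f N xs t \<le> max Hc xi"
    using lamH mugH by (auto intro: max.coboundedI1)
  then show ?thesis by (simp add: muj_def)
qed

section \<open>The new trial point\<close>

lemma newpt_margins:
  fixes xs :: "real list"
  assumes N: "N \<ge> 1" and r: "r > 0" and xi: "xi > 0"
    and s: "sorted xs" "distinct xs" "2 \<le> t" "t \<le> length xs"
  shows "xs ! (t - 2) + gapP xs t * (1 - 1/r) / 2 \<le> newpt f N r xi xs t"
    and "newpt f N r xi xs t \<le> xs ! (t - 1) - gapP xs t * (1 - 1/r) / 2"
proof -
  define c where "c = f (xs ! (t - 1)) - f (xs ! (t - 2))"
  define \<mu> where "\<mu> = muj f N xi xs t"
  define \<Delta> where "\<Delta> = gapP xs t"
  define shift where "shift = (\<bar>c\<bar> / \<mu>) ^ N * sgn c"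
  have \<Delta>: "\<Delta> > 0" using gapP_pos[OF s] by (simp add: \<Delta>_def)
  have \<mu>: "\<mu> > 0" using muj_lower(2)[OF s(3,4), where f=f and N=N and xi=xi] xi by (simp add: \<mu>_def)
  have "\<bar>c\<bar> / \<mu> \<le> \<Delta> powr (1 / real N)"
    using increment_le_muj[OF s] \<mu> by (simp add: c_def \<mu>_def \<Delta>_def divide_le_eq mult.commute)
  then have "(\<bar>c\<bar> / \<mu>) ^ N \<le> (\<Delta> powr (1 / real N)) ^ N" using \<mu> by (intro power_mono) auto
  then have "(\<bar>c\<bar> / \<mu>) ^ N \<le> \<Delta>" using powr_inverse_power[OF \<Delta> N] by simp
  moreover have "\<bar>shift\<bar> \<le> (\<bar>c\<bar> / \<mu>) ^ N"
    unfolding shift_def abs_mult using \<mu> by (cases "c = 0") (simp_all add: power_abs abs_sgn_eq)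
  ultimately have "\<bar>shift\<bar> \<le> \<Delta>" by linarith
  then have "- \<Delta> \<le> shift" "shift \<le> \<Delta>" by (auto simp: abs_le_iff)
  then have sh: "- (\<Delta> / (2 * r)) \<le> shift / (2 * r)" "shift / (2 * r) \<le> \<Delta> / (2 * r)"
    using r by (simp_all add: field_simps)
  have np: "newpt f N r xi xs t = (xs ! (t - 2) + xs ! (t - 1)) / 2 - shift / (2 * r)"
    by (simp add: newpt_def shift_def c_def \<mu>_def Let_def)
  have m: "\<Delta> * (1 - 1/r) / 2 = \<Delta> / 2 - \<Delta> / (2 * r)" using r by (simp add: field_simps)
  have ab: "xs ! (t - 1) = xs ! (t - 2) + \<Delta>" by (simp add: \<Delta>_def gapP_def)
  show "xs ! (t - 2) + gapP xs t * (1 - 1/r) / 2 \<le> newpt f N r xi xs t"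
    unfolding \<Delta>_def[symmetric] m using sh np ab by (simp add: field_simps)
  show "newpt f N r xi xs t \<le> xs ! (t - 1) - gapP xs t * (1 - 1/r) / 2"
    unfolding \<Delta>_def[symmetric] m using sh np ab by (simp add: field_simps)
qed

lemma newpt_separated:
  fixes xs :: "real list"
  assumes N: "N \<ge> 1" and r: "r \<ge> 1" and xi: "xi > 0"
    and s: "sorted xs" "distinct xs" "2 \<le> t" "t \<le> length xs"
  shows "xs ! (t - 2) \<le> newpt f N r xi xs t" "newpt f N r xi xs t \<le> xs ! (t - 1)"
    and "z \<in> set xs \<Longrightarrow> gapP xs t * (1 - 1/r) / 2 \<le> \<bar>newpt f N r xi xs t - z\<bar>"
proof -
  have m: "gapP xs t * (1 - 1/r) / 2 \<ge> 0" using gapP_pos[OF s] r by simp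
  have r0: "r > 0" using r by simp
  note margins = newpt_margins[OF N r0 xi s, where f=f]
  show "xs ! (t - 2) \<le> newpt f N r xi xs t" "newpt f N r xi xs t \<le> xs ! (t - 1)"
    using margins m r by linarith+
  assume "z \<in> set xs"
  then have "z \<le> xs ! (t - 2) \<or> xs ! (t - 1) \<le> z" using sorted_outside_consecutive s by blast
  then show "gapP xs t * (1 - 1/r) / 2 \<le> \<bar>newpt f N r xi xs t - z\<bar>"
    using margins abs_ge_self[of "newpt f N r xi xs t - z"] abs_ge_minus_self[of "newpt f N r xi xs t - z"]
    by linarith
qed

section \<open>Bounds on the characteristic\<close>

text \<open>Upper bound: since \<open>|z\<^sub>t - z\<^sub>t\<^sub>-\<^sub>1| \<le> \<mu>\<^sub>t D\<close> with \<open>D = (x\<^sub>t - x\<^sub>t\<^sub>-\<^sub>1)\<^sup>1\<^sup>/\<^sup>N\<close>,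
  the characteristic exceeds \<open>-2 min f\<close> by at most \<open>(r + 1/r) \<mu>\<^sub>t D\<close>.\<close>

lemma charR_upper:
  fixes xs :: "real list"
  assumes s: "sorted xs" "distinct xs" "2 \<le> t" "t \<le> length xs"
    and r: "r > 0" and xi: "xi > 0" and fmin: "\<forall>y\<in>set xs. fs \<le> f y"
  shows "charR f N r xi xs t + 2 * fs \<le> (r + 1/r) * muj f N xi xs t * gapP xs t powr (1 / real N)"
proof -
  define c where "c = f (xs ! (t - 1)) - f (xs ! (t - 2))"
  define \<mu> where "\<mu> = muj f N xi xs t"
  define D where "D = gapP xs t powr (1 / real N)"
  have D: "D > 0" using gapP_pos[OF s] by (simp add: D_def)
  have \<mu>: "\<mu> > 0" using muj_lower(2)[OF s(3,4), where f=f and N=N and xi=xi] xi by (simp add: \<mu>_def)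
  have a: "r * \<mu> * D > 0" using r \<mu> D by simp
  have "\<bar>c\<bar> \<le> \<mu> * D" using increment_le_muj[OF s] by (simp add: c_def \<mu>_def D_def)
  then have "c\<^sup>2 \<le> (\<mu> * D)\<^sup>2" by (metis abs_ge_zero power2_abs power_mono)
  then have "c\<^sup>2 / (r * \<mu> * D) \<le> (\<mu> * D)\<^sup>2 / (r * \<mu> * D)" using a by (simp add: divide_right_mono)
  also have "\<dots> = \<mu> * D / r" using r \<mu> D by (simp add: power2_eq_square field_simps)
  finally have "c\<^sup>2 / (r * \<mu> * D) \<le> \<mu> * D / r" .
  moreover have "fs \<le> f (xs ! (t - 1))" "fs \<le> f (xs ! (t - 2))" using fmin s by auto
  moreover have "charR f N r xi xs t = r * \<mu> * D + c\<^sup>2 / (r * \<mu> * D) - (f (xs ! (t - 1)) + f (xs ! (t - 2)))"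
    by (simp add: charR_def Let_def c_def \<mu>_def D_def)
  moreover have "r * \<mu> * D + \<mu> * D / r = (r + 1/r) * \<mu> * D" by (simp add: field_simps)
  ultimately show ?thesis unfolding \<mu>_def[symmetric] D_def[symmetric] by linarith
qed

text \<open>Concavity of \<open>u \<mapsto> u\<^sup>p\<close> for \<open>0 < p \<le> 1\<close>: \<open>u\<^sup>p + v\<^sup>p \<le> 2\<^sup>1\<^sup>-\<^sup>p (u + v)\<^sup>p\<close>.\<close>

lemma powr_sum_concave:
  fixes u v p :: real
  assumes u: "0 \<le> u" and v: "0 \<le> v" and p: "0 < p" "p \<le> 1"
  shows "u powr p + v powr p \<le> 2 powr (1 - p) * (u + v) powr p"
proof (cases "u = 0 \<or> v = 0")
  case True
  have "2 powr (1 - p) \<ge> 1" using p by (intro ge_one_powr_ge_zero) auto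
  then show ?thesis using True u v by (auto simp: mult_le_cancel_right1)
next
  case False
  define S where "S = u + v"
  have S: "S > 0" using False u v by (simp add: S_def)
  have young: "2 powr p * w powr p / S powr p \<le> p * (2 * w / S) + (1 - p)" if "w > 0" for w
    using Youngs_inequality_0[of p "1 - p" "2 * w / S" 1] that S p
    by (simp add: powr_divide powr_mult)
  have "2 powr p * u powr p / S powr p + 2 powr p * v powr p / S powr p
          \<le> p * (2 * u / S + 2 * v / S) + 2 * (1 - p)"
    using young[of u] young[of v] False u v by (simp add: algebra_simps)
  also have "2 * u / S + 2 * v / S = 2 * S / S" by (simp add: S_def add_divide_distrib[symmetric] algebra_simps)
  also have "2 * S / S = 2" using S by simp
  finally have "2 powr p * (u powr p + v powr p) \<le> 2 * S powr p"
    using S by (simp add: add_divide_distrib[symmetric] distrib_left divide_le_eq)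
  then have "u powr p + v powr p \<le> 2 * S powr p / 2 powr p" by (simp add: le_divide_eq mult.commute)
  then show ?thesis by (simp add: S_def powr_diff)
qed

lemma endpoint_excess_le_Kj:
  fixes xs :: "real list"
  assumes N: "N \<ge> 1" and loc: "xs ! (j - 2) \<le> xstar" "xstar \<le> xs ! (j - 1)"
    and fmin: "f xstar \<le> f (xs ! (j - 2))" "f xstar \<le> f (xs ! (j - 1))"
  shows "(f (xs ! (j - 2)) - f xstar) + (f (xs ! (j - 1)) - f xstar)
           \<le> 2 powr (1 - 1 / real N) * Kj f N xstar xs j * gapP xs j powr (1 / real N)"
proof -
  define p where "p = 1 / real N"
  define u where "u = xstar - xs ! (j - 2)"
  define v where "v = xs ! (j - 1) - xstar"
  define K where "K = Kj f N xstar xs j"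
  have p: "0 < p" "p \<le> 1" using N by (auto simp: p_def)
  have uv: "u \<ge> 0" "v \<ge> 0" using loc by (auto simp: u_def v_def)
  have K: "K = max ((f (xs ! (j - 2)) - f xstar) / u powr p) ((f (xs ! (j - 1)) - f xstar) / v powr p)"
    by (simp add: K_def Kj_def u_def v_def p_def)
  have K0: "K \<ge> 0" using fmin by (simp add: K le_max_iff_disj)
  have one_side: "y - f xstar \<le> K * w powr p"
    if "w \<ge> 0" "w = 0 \<Longrightarrow> y = f xstar" "(y - f xstar) / w powr p \<le> K" for y w
    using that by (cases "w = 0") (auto simp: divide_le_eq mult.commute)
  have "f (xs ! (j - 2)) - f xstar \<le> K * u powr p"
    by (rule one_side) (use loc in \<open>auto simp: u_def K le_max_iff_disj\<close>)
  moreover have "f (xs ! (j - 1)) - f xstar \<le> K * v powr p"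
    by (rule one_side) (use loc in \<open>auto simp: v_def K le_max_iff_disj\<close>)
  ultimately have "(f (xs ! (j - 2)) - f xstar) + (f (xs ! (j - 1)) - f xstar) \<le> K * (u powr p + v powr p)"
    by (simp add: distrib_left)
  also have "\<dots> \<le> K * (2 powr (1 - p) * (u + v) powr p)"
    using powr_sum_concave[OF uv p] K0 by (intro mult_left_mono) auto
  finally show ?thesis by (simp add: K_def p_def u_def v_def gapP_def ac_simps)
qed

text \<open>The scalar core of the lower bound: with \<open>s = r\<mu>\<^sub>j\<close>, \<open>B = 2\<^sup>1\<^sup>-\<^sup>1\<^sup>/\<^sup>N K\<^sub>j\<close>
  and \<open>M = M\<^sub>j\<close>, the tuning condition forces \<open>s + M\<^sup>2/s - B \<ge> s/8\<close>.\<close>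

lemma tuning_lower_bound:
  fixes s B M :: real
  assumes s: "0 < s" and BM: "M\<^sup>2 \<le> B\<^sup>2" and sB: "B + sqrt (B\<^sup>2 - M\<^sup>2) \<le> s"
  shows "s / 8 \<le> s + M\<^sup>2 / s - B"
proof -
  have Ms: "M\<^sup>2 / s \<ge> 0" using s by simp
  have sq: "sqrt (B\<^sup>2 - M\<^sup>2) \<ge> 0" using BM by simp
  consider "B \<le> s / 2" | "B > s / 2" "B\<^sup>2 / 2 \<le> M\<^sup>2" | "B > s / 2" "M\<^sup>2 < B\<^sup>2 / 2" by linarith
  then show ?thesis
  proof cases
    case 1
    then show ?thesis using Ms s by linarith
  next
    case 2
    have "(s / 2)\<^sup>2 \<le> B\<^sup>2" using 2 s by (intro power_mono) auto
    then have "s\<^sup>2 / 8 \<le> M\<^sup>2" using 2 by (simp add: power_divide)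
    then have "s / 8 \<le> M\<^sup>2 / s" using s by (simp add: le_divide_eq power2_eq_square)
    then show ?thesis using sB sq by linarith
  next
    case 3
    have "(B / 2)\<^sup>2 = B\<^sup>2 / 4" by (simp add: power_divide)
    then have "(B / 2)\<^sup>2 \<le> B\<^sup>2 - M\<^sup>2" using 3 zero_le_power2[of B] by linarith
    then have "B / 2 \<le> sqrt (B\<^sup>2 - M\<^sup>2)" by (rule real_le_rsqrt)
    then show ?thesis using 3 sB Ms s by linarith
  qed
qed

definition favourable :: "(real \<Rightarrow> real) \<Rightarrow> nat \<Rightarrow> real \<Rightarrow> real \<Rightarrow> real \<Rightarrow> real list \<Rightarrow> nat \<Rightarrow> bool" where
  "favourable f N r xi xstar xs j \<longleftrightarrow>
     2 \<le> j \<and> j \<le> length xs \<and> xs ! (j - 2) \<le> xstar \<and> xstar \<le> xs ! (j - 1) \<and>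
     4 powr (1 - 1 / real N) * (Kj f N xstar xs j)\<^sup>2 \<ge> (Mj f N xs j)\<^sup>2 \<and>
     r * muj f N xi xs j \<ge> 2 powr (1 - 1 / real N) * Kj f N xstar xs j
       + sqrt (4 powr (1 - 1 / real N) * (Kj f N xstar xs j)\<^sup>2 - (Mj f N xs j)\<^sup>2)"

lemma charR_lower:
  fixes xs :: "real list"
  assumes N: "N \<ge> 1" and r: "r > 0" and xi: "xi > 0" and s: "sorted xs" "distinct xs"
    and fmin: "\<forall>y\<in>set xs. f xstar \<le> f y"
    and fav: "favourable f N r xi xstar xs j"
  shows "r * muj f N xi xs j * gapP xs j powr (1 / real N) / 8 \<le> charR f N r xi xs j + 2 * f xstar"
proof -
  have j: "2 \<le> j" "j \<le> length xs" using fav by (auto simp: favourable_def)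
  define a where "a = f (xs ! (j - 2))"
  define b where "b = f (xs ! (j - 1))"
  define D where "D = gapP xs j powr (1 / real N)"
  define sv where "sv = r * muj f N xi xs j"
  define B where "B = 2 powr (1 - 1 / real N) * Kj f N xstar xs j"
  define M where "M = Mj f N xs j"
  have D: "D > 0" using gapP_pos[OF s j] by (simp add: D_def)
  have sv: "sv > 0" using muj_lower(2)[OF j, where f=f and N=N and xi=xi] xi r by (simp add: sv_def)
  have "(4::real) powr (1 - 1 / real N) = 2 powr (1 - 1 / real N) * 2 powr (1 - 1 / real N)"
    using powr_mult[of 2 2 "1 - 1 / real N"] by simp
  then have four: "4 powr (1 - 1 / real N) * (Kj f N xstar xs j)\<^sup>2 = B\<^sup>2"
    by (simp add: B_def power2_eq_square)
  have tuned: "sv / 8 \<le> sv + M\<^sup>2 / sv - B"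
    using tuning_lower_bound[OF sv] fav four by (simp add: favourable_def sv_def B_def M_def)
  have excess: "(a - f xstar) + (b - f xstar) \<le> B * D"
    using endpoint_excess_le_Kj[OF N, of xs j xstar f] fav fmin j
    by (simp add: favourable_def a_def b_def B_def D_def)
  have "(b - a)\<^sup>2 = M\<^sup>2 * D\<^sup>2"
    using D by (simp add: M_def Mj_def a_def b_def D_def power_divide power2_commute)
  then have "(b - a)\<^sup>2 / (sv * D) = M\<^sup>2 / sv * D" using D sv by (simp add: power2_eq_square field_simps)
  then have "charR f N r xi xs j = sv * D + M\<^sup>2 / sv * D - (b + a)"
    by (simp add: charR_def Let_def a_def b_def sv_def D_def)
  then have "D * (sv + M\<^sup>2 / sv - B) \<le> charR f N r xi xs j + 2 * f xstar"
    using excess by (simp add: algebra_simps)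
  moreover have "D * (sv / 8) \<le> D * (sv + M\<^sup>2 / sv - B)" using tuned D by simp
  ultimately show ?thesis by (simp add: sv_def D_def mult.commute)
qed

text \<open>Comparing the two bounds: the interval of largest characteristic is at least a fixed
  fraction of the length of a favourable interval.\<close>

lemma chosen_interval_long:
  fixes xs :: "real list"
  assumes holder: "\<forall>x1\<in>{0..1}. \<forall>x2\<in>{0..1}. \<bar>f x1 - f x2\<bar> \<le> Hc * \<bar>x1 - x2\<bar> powr (1 / real N)"
    and N: "N \<ge> 1" and r: "r > 0" and xi: "xi > 0"
    and sub: "set xs \<subseteq> {0..1}" and s: "sorted xs" "distinct xs"
    and fmin: "\<forall>y\<in>set xs. f xstar \<le> f y"
    and fav: "favourable f N r xi xstar xs j"
    and t: "2 \<le> t" "t \<le> length xs" and best: "charR f N r xi xs j \<le> charR f N r xi xs t"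
  shows "(r * xi / (8 * (r + 1/r) * max Hc xi)) ^ N * gapP xs j \<le> gapP xs t"
proof -
  define C where "C = 8 * (r + 1/r) * max Hc xi"
  define Dj where "Dj = gapP xs j powr (1 / real N)"
  define Dt where "Dt = gapP xs t powr (1 / real N)"
  have j: "2 \<le> j" "j \<le> length xs" using fav by (auto simp: favourable_def)
  have gj: "gapP xs j > 0" and gt: "gapP xs t > 0" using gapP_pos s j t by auto
  have C: "C > 0" using r xi by (simp add: C_def add_pos_pos)
  have "r * xi * Dj / 8 \<le> r * muj f N xi xs j * Dj / 8"
    using muj_lower(2)[OF j, where f=f and N=N and xi=xi] r gj by (simp add: Dj_def)
  also have "\<dots> \<le> charR f N r xi xs t + 2 * f xstar"
    using charR_lower[OF N r xi s fmin fav] best by (simp add: Dj_def)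
  also have "\<dots> \<le> (r + 1/r) * muj f N xi xs t * Dt"
    using charR_upper[OF s t r xi fmin] by (simp add: Dt_def)
  also have "\<dots> \<le> (r + 1/r) * max Hc xi * Dt"
    using muj_upper[OF holder sub s t, where xi=xi] r gt
    by (intro mult_right_mono mult_left_mono) (auto simp: Dt_def add_pos_pos)
  also have "\<dots> = C * Dt / 8" by (simp add: C_def)
  finally have "r * xi / C * Dj \<le> Dt" using C by (simp add: field_simps)
  then have "(r * xi / C * Dj) ^ N \<le> Dt ^ N" using r xi C gj by (intro power_mono) (auto simp: Dj_def)
  moreover have "(r * xi / C * Dj) ^ N = (r * xi / C) ^ N * gapP xs j"
    unfolding power_mult_distrib Dj_def using powr_inverse_power[OF gj N] by simp
  moreover have "Dt ^ N = gapP xs t" using powr_inverse_power[OF gt N] by (simp add: Dt_def)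
  ultimately show ?thesis by (simp add: C_def)
qed

lemma pts_props: "set (pts x n) = x ` {1..n}" "sorted (pts x n)" "distinct (pts x n)"
  by (auto simp: pts_def)

lemma PLT_run_step:
  assumes "PLT_run f N r xi x qn p t" "1 \<le> l"
  shows "qn (Suc l) = qn l + p (Suc l)" "1 \<le> p (Suc l)"
  using assms unfolding PLT_run_def by auto

lemma PLT_run_choice:
  assumes run: "PLT_run f N r xi x qn p t" and l: "1 \<le> l" and k: "k \<in> {1..p (Suc l)}"
  defines "xs \<equiv> pts x (qn l)"
  shows "t l k \<in> {2..length xs}"
    and "\<forall>i\<in>{2..length xs} - t l ` {1..<k}. charR f N r xi xs i \<le> charR f N r xi xs (t l k)"
    and "x (qn l + k) = newpt f N r xi xs (t l k)"
  using run l k unfolding PLT_run_def xs_def Let_def by auto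

lemma PLT_run_qn_less:
  assumes run: "PLT_run f N r xi x qn p t" and "1 \<le> l" "l < l'"
  shows "qn l < qn l'"
  using assms(3,2)
proof (induction l' rule: less_Suc_induct)
  case (1 i)
  then show ?case using PLT_run_step[OF run, of i] by simp
next
  case (2 i j k)
  then show ?case by linarith
qed

text \<open>All trial points lie in [0,1]: the initial ones by definition, later ones because
  every new point lies between two earlier ones.\<close>

lemma PLT_run_trials_in_unit:
  assumes N: "N \<ge> 1" and r: "r \<ge> 1" and xi: "xi > 0"
    and run: "PLT_run f N r xi x qn p t" and l: "1 \<le> l"
  shows "x ` {1..qn l} \<subseteq> {0..1}"
  using l
proof (induction l rule: dec_induct)
  case base
  have "x 1 = 0" "x 2 = 1" "\<forall>i\<in>{3..qn 1}. 0 < x i \<and> x i < 1" using run by (auto simp: PLT_run_def)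
  moreover have "n = 1 \<or> n = 2 \<or> n \<in> {3..qn 1}" if "n \<in> {1..qn 1}" for n
    using that by auto
  ultimately have "x n \<in> {0..1}" if "n \<in> {1..qn 1}" for n
    using that by (metis atLeastAtMost_iff less_imp_le order_refl zero_le_one)
  then show ?case by blast
next
  case (step l)
  define xs where "xs = pts x (qn l)"
  have sub: "set xs \<subseteq> {0..1}" using step.IH by (simp add: xs_def pts_props)
  have "x n \<in> {0..1}" if n: "n \<in> {qn l + 1..qn (Suc l)}" for n
  proof -
    define k where "k = n - qn l"
    have k: "k \<in> {1..p (Suc l)}" "n = qn l + k" using n PLT_run_step[OF run step.hyps(1)] by (auto simp: k_def)
    note choice = PLT_run_choice[OF run step.hyps(1) k(1), folded xs_def]
    have st: "sorted xs" "distinct xs" "2 \<le> t l k" "t l k \<le> length xs"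
      using choice(1) by (auto simp: xs_def pts_props)
    have "xs ! (t l k - 2) \<in> set xs" "xs ! (t l k - 1) \<in> set xs" using st by auto
    then show ?thesis
      using newpt_separated(1,2)[OF N r xi st, where f=f] choice(3) k(2) sub by force
  qed
  moreover have "{1..qn (Suc l)} \<subseteq> {1..qn l} \<union> {qn l + 1..qn (Suc l)}" by auto
  ultimately show ?case using step.IH by blast
qed

section \<open>Separation of the new trial points\<close>

lemma PLT_first_new_point_separated:
  assumes N: "N \<ge> 1" and r: "r > 1" and xi: "xi > 0"
    and holder: "\<forall>x1\<in>{0..1}. \<forall>x2\<in>{0..1}. \<bar>f x1 - f x2\<bar> \<le> Hc * \<bar>x1 - x2\<bar> powr (1 / real N)"
    and xstar_min: "\<forall>y\<in>{0..1}. f xstar \<le> f y"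
    and run: "PLT_run f N r xi x qn p t" and l: "1 \<le> l"
    and iso: "\<forall>n. x n \<noteq> xstar \<longrightarrow> d \<le> \<bar>x n - xstar\<bar>"
    and fav: "favourable f N r xi xstar (pts x (qn l)) j"
  shows "x (qn l + 1) \<in> {0..1}"
    and "\<forall>n\<in>{1..qn l}. (1 - 1/r) / 2 * (r * xi / (8 * (r + 1/r) * max Hc xi)) ^ N * d
                         \<le> \<bar>x (qn l + 1) - x n\<bar>"
proof -
  define xs where "xs = pts x (qn l)"
  define \<rho> where "\<rho> = (r * xi / (8 * (r + 1/r) * max Hc xi)) ^ N"
  have r1: "1 \<le> r" and r0: "0 < r" using r by simp_all
  have s: "sorted xs" "distinct xs" and sub: "set xs \<subseteq> {0..1}"
    using PLT_run_trials_in_unit[OF N r1 xi run l] by (auto simp: xs_def pts_props)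
  have fmin: "\<forall>y\<in>set xs. f xstar \<le> f y" using sub xstar_min by auto
  have fav': "favourable f N r xi xstar xs j" using fav by (simp add: xs_def)
  then have j: "2 \<le> j" "j \<le> length xs" "xs ! (j - 2) \<le> xstar" "xstar \<le> xs ! (j - 1)"
    by (auto simp: favourable_def)
  have one: "(1::nat) \<in> {1..p (Suc l)}" using PLT_run_step(2)[OF run l] by simp
  note choice = PLT_run_choice[OF run l one, folded xs_def]
  have t: "2 \<le> t l 1" "t l 1 \<le> length xs" using choice(1) by auto
  have "d \<le> gapP xs j"
    using gapP_ge_isolation[OF s j] iso by (auto simp: xs_def pts_props)
  moreover have "0 \<le> r * xi / (8 * (r + 1/r) * max Hc xi)"
    using r xi by (auto intro!: divide_nonneg_pos add_pos_pos simp: less_max_iff_disj)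
  ultimately have "\<rho> * d \<le> \<rho> * gapP xs j" by (simp add: \<rho>_def mult_left_mono)
  also have "\<dots> \<le> gapP xs (t l 1)"
    using chosen_interval_long[OF holder N r0 xi sub s fmin fav' t] choice(2) j(1,2)
    by (simp add: \<rho>_def)
  finally have "(1 - 1/r) / 2 * \<rho> * d \<le> gapP xs (t l 1) * (1 - 1/r) / 2"
    using r by (simp add: mult.commute mult_left_mono)
  then have "\<forall>z\<in>set xs. (1 - 1/r) / 2 * \<rho> * d \<le> \<bar>x (qn l + 1) - z\<bar>"
    using newpt_separated(3)[OF N r1 xi s t, where f=f] choice(3) by force
  then show "\<forall>n\<in>{1..qn l}. (1 - 1/r) / 2 * (r * xi / (8 * (r + 1/r) * max Hc xi)) ^ N * d
                         \<le> \<bar>x (qn l + 1) - x n\<bar>"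
    by (simp add: \<rho>_def xs_def pts_props)
  have "xs ! (t l 1 - 2) \<in> set xs" "xs ! (t l 1 - 1) \<in> set xs" using t by auto
  then show "x (qn l + 1) \<in> {0..1}"
    using newpt_separated(1,2)[OF N r1 xi s t, where f=f] choice(3) sub by force
qed

lemma isolated_unless_subsequence_limit:
  fixes x :: "nat \<Rightarrow> 'a::metric_space"
  assumes "\<not> (\<exists>\<sigma>. strict_mono \<sigma> \<and> (\<lambda>n. x (\<sigma> n)) \<longlonglongrightarrow> a)"
  obtains d where "d > 0" "\<forall>n. x n \<noteq> a \<longrightarrow> d \<le> dist (x n) a"
proof -
  have "\<not> a islimpt range x"
    using assms islimpt_range_imp_convergent_subsequence[of a x] by (auto simp: comp_def)
  then obtain d where "d > 0" "\<forall>y\<in>range x. y \<noteq> a \<longrightarrow> d \<le> dist y a"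
    by (auto simp: islimpt_approachable not_less)
  then show ?thesis using that by blast
qed

lemma separated_family_in_compact_finite:
  fixes y :: "'b \<Rightarrow> 'a::metric_space"
  assumes "compact K" "y ` S \<subseteq> K" "\<eta> > 0"
    and sep: "\<And>l l'. l \<in> S \<Longrightarrow> l' \<in> S \<Longrightarrow> l \<noteq> l' \<Longrightarrow> \<eta> \<le> dist (y l) (y l')"
  shows "finite S"
proof -
  have inj: "inj_on y S"
  proof (rule inj_onI)
    fix l l' assume "l \<in> S" "l' \<in> S" "y l = y l'"
    then show "l = l'" using sep[of l l'] \<open>\<eta> > 0\<close> by (cases "l = l'") auto
  qed
  have "w = z" if zw: "z \<in> y ` S" "w \<in> y ` S" "dist w z < \<eta>" for z w
  proof -
    obtain l l' where "l \<in> S" "l' \<in> S" "z = y l" "w = y l'" using zw(1,2) by auto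
    then show ?thesis using sep[of l' l] zw(3) by (cases "l = l'") auto
  qed
  then have "\<not> z islimpt y ` S" for z by (intro discrete_imp_not_islimpt[OF \<open>\<eta> > 0\<close>])
  then have "finite (y ` S)" using assms(1,2) by (meson compact_eq_Bolzano_Weierstrass)
  then show ?thesis using inj finite_imageD by blast
qed

theorem theorem2:
  fixes f :: "real \<Rightarrow> real" and N :: nat and r xi Hc xstar :: real
    and x :: "nat \<Rightarrow> real" and qn p :: "nat \<Rightarrow> nat" and t :: "nat \<Rightarrow> nat \<Rightarrow> nat"
    and Q :: nat and Hs :: "nat set"
  assumes N: "N \<ge> 1" and r: "r > 1" and xi: "xi > 0"
    and holder: "\<forall>x1\<in>{0..1}. \<forall>x2\<in>{0..1}. \<bar>f x1 - f x2\<bar> \<le> Hc * \<bar>x1 - x2\<bar> powr (1 / real N)"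
    and xstar: "xstar \<in> {0..1}" "\<forall>y\<in>{0..1}. f xstar \<le> f y"
    and run: "PLT_run f N r xi x qn p t"
    and pbound: "\<forall>l>1. p l \<le> Q"
    and Hs: "infinite Hs" "Hs \<subseteq> {1..}"
    and cond: "\<forall>l\<in>Hs. \<exists>j. (let xs = pts x (qn l) in
                 2 \<le> j \<and> j \<le> length xs \<and> xs ! (j - 2) \<le> xstar \<and> xstar \<le> xs ! (j - 1) \<and>
                 4 powr (1 - 1 / real N) * (Kj f N xstar xs j)\<^sup>2 \<ge> (Mj f N xs j)\<^sup>2 \<and>
                 r * muj f N xi xs j \<ge> 2 powr (1 - 1 / real N) * Kj f N xstar xs j
                   + sqrt (4 powr (1 - 1 / real N) * (Kj f N xstar xs j)\<^sup>2 - (Mj f N xs j)\<^sup>2))"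
  shows "\<exists>\<sigma>. strict_mono \<sigma> \<and> (\<lambda>n. x (\<sigma> n)) \<longlonglongrightarrow> xstar"
proof (rule ccontr)
  assume "\<not> ?thesis"
  then obtain d where d: "d > 0" "\<forall>n. x n \<noteq> xstar \<longrightarrow> d \<le> \<bar>x n - xstar\<bar>"
    by (rule isolated_unless_subsequence_limit) (auto simp: dist_real_def)
  define \<eta> where "\<eta> = (1 - 1/r) / 2 * (r * xi / (8 * (r + 1/r) * max Hc xi)) ^ N * d"
  have \<eta>: "\<eta> > 0" using r xi d by (simp add: \<eta>_def add_pos_pos)
  define y where "y l = x (qn l + 1)" for l
  have new: "y l \<in> {0..1}" "\<forall>n\<in>{1..qn l}. \<eta> \<le> \<bar>y l - x n\<bar>" if "l \<in> Hs" for l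
  proof -
    have l: "1 \<le> l" using that Hs(2) by auto
    from cond that have "\<exists>j. favourable f N r xi xstar (pts x (qn l)) j"
      unfolding favourable_def Let_def by (rule bspec)
    then obtain j where "favourable f N r xi xstar (pts x (qn l)) j" ..
    from PLT_first_new_point_separated[OF N r xi holder xstar(2) run l d(2) this]
    show "y l \<in> {0..1}" "\<forall>n\<in>{1..qn l}. \<eta> \<le> \<bar>y l - x n\<bar>"
      unfolding y_def \<eta>_def by simp_all
  qed
  have later: "\<eta> \<le> dist (y l) (y l')" if "l \<in> Hs" "l' \<in> Hs" "l < l'" for l l'
    using new(2)[OF that(2), rule_format, of "qn l + 1"] PLT_run_qn_less[OF run _ that(3)] that Hs
    by (force simp: y_def dist_real_def abs_minus_commute)
  have "finite Hs"
    using separated_family_in_compact_finite[OF compact_Icc _ \<eta>, of y Hs 0 1] new(1) later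
    by (metis dist_commute image_subsetI linorder_neq_iff)
  with Hs(1) show False by contradiction
qed

end
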